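(* For an infinite Boolean algebra $A$, $\mathrm{aut}(A)\leq\mathrm{sub}(A)$.
   Context: $\mathrm{aut}(A)$ is the number of automorphisms of $A$ and $\mathrm{sub}(A)$ is the number of subalgebras of $A$. *)

theory Defs
  imports Main
begin

unbundle cardinal_syntax

definition ba_automorphisms :: "('a::boolean_algebra \<Rightarrow> 'a) set" where
  "ba_automorphisms = {f. bij f
      \<and> (\<forall>x y. f (sup x y) = sup (f x) (f y))
      \<and> (\<forall>x y. f (inf x y) = inf (f x) (f y))
      \<and> (\<forall>x. f (- x) = - f x)
      \<and> f bot = bot \<and> f top = top}"

definition ba_subalgebras :: "'a::boolean_algebra set set" where
  "ba_subalgebras = {S. bot \<in> S \<and> top \<in> S
      \<and> (\<forall>x\<in>S. \<forall>y\<in>S. sup x y \<in> S)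
      \<and> (\<forall>x\<in>S. \<forall>y\<in>S. inf x y \<in> S)
      \<and> (\<forall>x\<in>S. - x \<in> S)}"

end

theory Submission
  imports Defs
begin

text \<open>Call X irredundant if no x \<in> X lies in the subalgebra generated by X - {x}.
  Generation is finitary, so by Zorn's lemma there is a maximal irredundant X, and maximality
  makes the subalgebra B generated by X dense: if some a \<noteq> 0 had no nonzero element of B
  below it, X \<union> {a} would still be irredundant. Over a dense set D every a is determined by
  {d \<in> D. d \<le> a}. Hence X is infinite, and an automorphism f, being determined by its values
  on X, is determined by the set {(x, d) \<in> X \<times> B. d \<le> f x}. As |B| \<le> |X|, this gives
  aut(A) \<le> 2^|X|; and as X is irredundant, Y \<mapsto> \<langle>Y\<rangle> is injective on the subsets of X,
  so 2^|X| \<le> sub(A).\<close>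

lemma eq_if_inf_eq_inf_compl:
  fixes y a b :: "'a::boolean_algebra"
  assumes "inf y a = inf y b" and "inf (- y) a = inf (- y) b"
  shows "a = b"
proof -
  have "a = sup (inf y a) (inf (- y) a)"
    by (simp flip: inf_sup_distrib2)
  also have "\<dots> = sup (inf y b) (inf (- y) b)"
    using assms by simp
  also have "\<dots> = b"
    by (simp flip: inf_sup_distrib2)
  finally show ?thesis .
qed

lemma inf_inf_distrib_left:
  fixes y a b :: "'a::boolean_algebra"
  shows "inf y (inf a b) = inf (inf y a) (inf y b)"
  by (simp add: inf_aci)

lemma neq_iff_inf_compl:
  fixes a b :: "'a::boolean_algebra"
  shows "a \<noteq> b \<longleftrightarrow> inf a (- b) \<noteq> bot \<or> inf b (- a) \<noteq> bot"
  by (auto simp: inf_shunt)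

lemma inf_compl_le_if_inf_compl_eq:
  fixes a x q :: "'a::boolean_algebra"
  assumes "inf (- a) x = inf (- a) q"
  shows "inf x (- q) \<le> a"
proof -
  have "inf (inf x (- q)) (- a) = inf (inf (- a) x) (- q)"
    by (simp add: inf_aci)
  also have "\<dots> = inf (inf (- a) q) (- q)"
    using assms by simp
  also have "\<dots> = bot"
    by (simp add: inf_assoc)
  finally show ?thesis
    by (simp add: inf_shunt)
qed

definition ba_cond :: "'a::boolean_algebra \<Rightarrow> 'a \<Rightarrow> 'a \<Rightarrow> 'a" where
  "ba_cond y p q = sup (inf y p) (inf (- y) q)"

lemma inf_ba_cond:
  "inf y (ba_cond y p q) = inf y p"
  "inf (- y) (ba_cond y p q) = inf (- y) q"
  by (simp_all add: ba_cond_def inf_sup_distrib1 inf_assoc[symmetric])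

lemma ba_cond_same: "ba_cond y x x = x"
  by (rule eq_if_inf_eq_inf_compl[of y]) (simp_all add: inf_ba_cond)

lemma ba_cond_top_bot: "ba_cond y top bot = y"
  by (simp add: ba_cond_def)

lemma ba_cond_sup: "sup (ba_cond y p q) (ba_cond y p' q') = ba_cond y (sup p p') (sup q q')"
  by (rule eq_if_inf_eq_inf_compl[of y]) (simp_all add: inf_sup_distrib1 inf_ba_cond)

lemma ba_cond_inf: "inf (ba_cond y p q) (ba_cond y p' q') = ba_cond y (inf p p') (inf q q')"
  by (rule eq_if_inf_eq_inf_compl[of y])
    (simp_all only: inf_inf_distrib_left[of y] inf_inf_distrib_left[of "- y"] inf_ba_cond)

lemma ba_cond_compl: "- ba_cond y p q = ba_cond y (- p) (- q)"
proof (rule compl_unique)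
  show "inf (ba_cond y p q) (ba_cond y (- p) (- q)) = bot"
    by (simp add: ba_cond_inf ba_cond_same)
  show "sup (ba_cond y p q) (ba_cond y (- p) (- q)) = top"
    by (simp add: ba_cond_sup ba_cond_same)
qed

lemma card_of_finite_le_infinite:
  assumes "finite A" "infinite B"
  shows "|A| \<le>o |B|"
  using finite_ordLess_infinite[of "|A|" "|B|"] assms
  by (simp add: ordLess_imp_ordLeq card_of_well_order_on Field_card_of)

lemma card_of_Un_le_infinite:
  "infinite S \<Longrightarrow> |A| \<le>o |S| \<Longrightarrow> |B| \<le>o |S| \<Longrightarrow> |A \<union> B| \<le>o |S|"
  using card_of_Un_ordLeq_infinite_Field[of "|S|" A B] by (simp add: card_of_card_order_on Field_card_of)

lemma card_of_Times_le_infinite: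
  "infinite S \<Longrightarrow> |A| \<le>o |S| \<Longrightarrow> |B| \<le>o |S| \<Longrightarrow> |A \<times> B| \<le>o |S|"
  using card_of_Times_ordLeq_infinite_Field[of "|S|" A B] by (simp add: card_of_card_order_on Field_card_of)

lemma card_of_Pow_mono:
  assumes "|A| \<le>o |B|"
  shows "|Pow A| \<le>o |Pow B|"
proof -
  obtain h where h: "inj_on h A" "h ` A \<subseteq> B"
    using assms card_of_ordLeq[of A B] by blast
  show ?thesis
  proof (rule card_of_ordLeqI[of "image h"])
    show "inj_on (image h) (Pow A)"
      by (rule inj_on_image_Pow[OF h(1)])
    show "h ` Y \<in> Pow B" if "Y \<in> Pow A" for Y
      using that h(2) by auto
  qed
qed

lemma ba_subalgebrasI:
  assumes "bot \<in> T" "top \<in> T" "\<And>x y. x \<in> T \<Longrightarrow> y \<in> T \<Longrightarrow> sup x y \<in> T"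
    "\<And>x y. x \<in> T \<Longrightarrow> y \<in> T \<Longrightarrow> inf x y \<in> T" "\<And>x. x \<in> T \<Longrightarrow> - x \<in> T"
  shows "T \<in> ba_subalgebras"
  using assms unfolding ba_subalgebras_def by auto

lemma ba_subalgebrasD:
  assumes "T \<in> ba_subalgebras"
  shows "bot \<in> T" "top \<in> T" "x \<in> T \<Longrightarrow> y \<in> T \<Longrightarrow> sup x y \<in> T"
    "x \<in> T \<Longrightarrow> y \<in> T \<Longrightarrow> inf x y \<in> T" "x \<in> T \<Longrightarrow> - x \<in> T"
  using assms unfolding ba_subalgebras_def by auto

lemma Union_directed_in_ba_subalgebras:
  assumes sub: "\<T> \<subseteq> ba_subalgebras" and "\<T> \<noteq> {}"
    and directed: "\<And>T T'. T \<in> \<T> \<Longrightarrow> T' \<in> \<T> \<Longrightarrow> \<exists>U\<in>\<T>. T \<union> T' \<subseteq> U"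
  shows "\<Union>\<T> \<in> ba_subalgebras"
proof (rule ba_subalgebrasI)
  obtain T where "T \<in> \<T>"
    using \<open>\<T> \<noteq> {}\<close> by blast
  then show "bot \<in> \<Union>\<T>" "top \<in> \<Union>\<T>"
    using ba_subalgebrasD(1,2)[OF subsetD[OF sub]] by blast+
next
  fix x y
  assume "x \<in> \<Union>\<T>" "y \<in> \<Union>\<T>"
  then obtain T T' where "T \<in> \<T>" "T' \<in> \<T>" "x \<in> T" "y \<in> T'"
    by blast
  moreover from this(1,2) obtain U where "U \<in> \<T>" "T \<union> T' \<subseteq> U"
    using directed by blast
  ultimately have "U \<in> \<T>" "x \<in> U" "y \<in> U"
    by blast+
  then show "sup x y \<in> \<Union>\<T>" "inf x y \<in> \<Union>\<T>"
    using ba_subalgebrasD(3,4)[OF subsetD[OF sub]] by blast+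
next
  fix x
  assume "x \<in> \<Union>\<T>"
  then show "- x \<in> \<Union>\<T>"
    using ba_subalgebrasD(5)[OF subsetD[OF sub]] by blast
qed

definition ba_generated :: "'a::boolean_algebra set \<Rightarrow> 'a set" where
  "ba_generated S = \<Inter>{T \<in> ba_subalgebras. S \<subseteq> T}"

lemma ba_generated_in_subalgebras: "ba_generated S \<in> ba_subalgebras"
  unfolding ba_generated_def ba_subalgebras_def by auto

lemma subset_ba_generated: "S \<subseteq> ba_generated S"
  unfolding ba_generated_def by auto

lemma ba_generated_least: "T \<in> ba_subalgebras \<Longrightarrow> S \<subseteq> T \<Longrightarrow> ba_generated S \<subseteq> T"
  unfolding ba_generated_def by auto

lemma ba_generated_mono: "S \<subseteq> S' \<Longrightarrow> ba_generated S \<subseteq> ba_generated S'"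
  by (meson ba_generated_in_subalgebras ba_generated_least order_trans subset_ba_generated)

lemmas ba_generated_closed = ba_subalgebrasD[OF ba_generated_in_subalgebras]

lemma ba_generated_insert:
  "ba_generated (insert y S) \<subseteq> {ba_cond y p q | p q. p \<in> ba_generated S \<and> q \<in> ba_generated S}"
  (is "_ \<subseteq> ?R")
proof (rule ba_generated_least)
  have cond_in: "ba_cond y p q \<in> ?R" if "p \<in> ba_generated S" "q \<in> ba_generated S" for p q
    using that by blast
  show "?R \<in> ba_subalgebras"
  proof (rule ba_subalgebrasI)
    show "bot \<in> ?R" "top \<in> ?R"
      using cond_in[OF ba_generated_closed(1,1)] cond_in[OF ba_generated_closed(2,2)]
      by (simp_all add: ba_cond_same)
  next
    fix a b
    assume "a \<in> ?R" "b \<in> ?R"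
    then obtain p q p' q' where ab: "a = ba_cond y p q" "b = ba_cond y p' q'"
      and gen: "p \<in> ba_generated S" "q \<in> ba_generated S" "p' \<in> ba_generated S" "q' \<in> ba_generated S"
      by blast
    show "sup a b \<in> ?R"
      unfolding ab ba_cond_sup by (intro cond_in ba_generated_closed gen)
    show "inf a b \<in> ?R"
      unfolding ab ba_cond_inf by (intro cond_in ba_generated_closed gen)
  next
    fix a
    assume "a \<in> ?R"
    then obtain p q where a: "a = ba_cond y p q" and gen: "p \<in> ba_generated S" "q \<in> ba_generated S"
      by blast
    show "- a \<in> ?R"
      unfolding a ba_cond_compl by (intro cond_in ba_generated_closed gen)
  qed
  show "insert y S \<subseteq> ?R"
  proof
    fix x
    assume "x \<in> insert y S"
    then show "x \<in> ?R"
    proof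
      assume "x = y"
      then show ?thesis
        using cond_in[OF ba_generated_closed(2,1)] by (simp add: ba_cond_top_bot)
    next
      assume "x \<in> S"
      then show ?thesis
        using cond_in[of x x] subset_ba_generated by (auto simp: ba_cond_same)
    qed
  qed
qed

lemma finite_ba_generated: "finite S \<Longrightarrow> finite (ba_generated S)"
proof (induction S rule: finite_induct)
  case empty
  have "ba_generated {} \<subseteq> {bot, top}"
    by (rule ba_generated_least) (auto simp: ba_subalgebras_def)
  then show ?case
    by (rule finite_subset) simp
next
  case (insert y S)
  have "ba_generated (insert y S) \<subseteq> (\<lambda>(p, q). ba_cond y p q) ` (ba_generated S \<times> ba_generated S)"
    using ba_generated_insert by fastforce
  then show ?case
    using insert.IH finite_subset by blast
qed

lemma ba_generated_subset_UN_finite: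
  "ba_generated S \<subseteq> (\<Union>F\<in>{F. finite F \<and> F \<subseteq> S}. ba_generated F)" (is "_ \<subseteq> \<Union>?\<T>")
proof (rule ba_generated_least)
  show "\<Union>?\<T> \<in> ba_subalgebras"
  proof (rule Union_directed_in_ba_subalgebras)
    show "?\<T> \<subseteq> ba_subalgebras"
      by (auto intro: ba_generated_in_subalgebras)
    have "ba_generated {} \<in> ?\<T>"
      by simp
    then show "?\<T> \<noteq> {}"
      by blast
    show "\<exists>U\<in>?\<T>. T \<union> T' \<subseteq> U" if T: "T \<in> ?\<T>" and T': "T' \<in> ?\<T>" for T T'
    proof -
      obtain F where F: "T = ba_generated F" "F \<in> {F. finite F \<and> F \<subseteq> S}"
        using T by (rule imageE)
      obtain F' where F': "T' = ba_generated F'" "F' \<in> {F. finite F \<and> F \<subseteq> S}"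
        using T' by (rule imageE)
      have "ba_generated (F \<union> F') \<in> ?\<T>"
        using F(2) F'(2) by simp
      moreover have "T \<union> T' \<subseteq> ba_generated (F \<union> F')"
        using F(1) F'(1) ba_generated_mono[of F "F \<union> F'"] ba_generated_mono[of F' "F \<union> F'"]
        by simp
      ultimately show ?thesis
        by blast
    qed
  qed
  show "S \<subseteq> \<Union>?\<T>"
  proof
    fix s
    assume "s \<in> S"
    then have "ba_generated {s} \<in> ?\<T>"
      by simp
    moreover have "s \<in> ba_generated {s}"
      using subset_ba_generated by blast
    ultimately show "s \<in> \<Union>?\<T>"
      by blast
  qed
qed

lemma ba_generated_finitary:
  assumes "x \<in> ba_generated S"
  obtains F where "finite F" "F \<subseteq> S" "x \<in> ba_generated F"
  using subsetD[OF ba_generated_subset_UN_finite assms] that by blast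

fun ba_generation_stage :: "'a::boolean_algebra set \<Rightarrow> nat \<Rightarrow> 'a set" where
  "ba_generation_stage S 0 = S \<union> {bot, top}"
| "ba_generation_stage S (Suc n) =
    (let T = ba_generation_stage S n
     in T \<union> {sup a b | a b. a \<in> T \<and> b \<in> T} \<union> {inf a b | a b. a \<in> T \<and> b \<in> T} \<union> uminus ` T)"

lemma ba_generation_stage_mono: "m \<le> n \<Longrightarrow> ba_generation_stage S m \<subseteq> ba_generation_stage S n"
  by (induction n rule: dec_induct) (auto simp: Let_def)

lemma ba_generation_stage_Suc_closed:
  assumes "x \<in> ba_generation_stage S n" "y \<in> ba_generation_stage S n"
  shows "sup x y \<in> ba_generation_stage S (Suc n)" "inf x y \<in> ba_generation_stage S (Suc n)"
  using assms by (auto simp: Let_def)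

lemma compl_in_ba_generation_stage_Suc:
  "x \<in> ba_generation_stage S n \<Longrightarrow> - x \<in> ba_generation_stage S (Suc n)"
  by (simp add: Let_def)

lemma ba_generated_subset_stages: "ba_generated S \<subseteq> (\<Union>n. ba_generation_stage S n)"
  (is "_ \<subseteq> ?U")
proof (rule ba_generated_least)
  have common: "\<exists>n. x \<in> ba_generation_stage S n \<and> y \<in> ba_generation_stage S n"
    if x: "x \<in> ?U" and y: "y \<in> ?U" for x y
  proof -
    obtain m where "x \<in> ba_generation_stage S m"
      using x by blast
    moreover obtain k where "y \<in> ba_generation_stage S k"
      using y by blast
    ultimately have "x \<in> ba_generation_stage S (max m k)" "y \<in> ba_generation_stage S (max m k)"
      using ba_generation_stage_mono[of m "max m k" S] ba_generation_stage_mono[of k "max m k" S]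
      by auto
    then show ?thesis
      by blast
  qed
  show "?U \<in> ba_subalgebras"
  proof (rule ba_subalgebrasI)
    show "bot \<in> ?U" "top \<in> ?U"
      using ba_generation_stage.simps(1)[of S] by blast+
    show "sup x y \<in> ?U" "inf x y \<in> ?U" if x: "x \<in> ?U" and y: "y \<in> ?U" for x y
    proof -
      obtain n where "x \<in> ba_generation_stage S n" "y \<in> ba_generation_stage S n"
        using common[OF x y] by blast
      then have "sup x y \<in> ba_generation_stage S (Suc n)" "inf x y \<in> ba_generation_stage S (Suc n)"
        by (rule ba_generation_stage_Suc_closed)+
      then show "sup x y \<in> ?U" "inf x y \<in> ?U"
        by blast+
    qed
    show "- x \<in> ?U" if x: "x \<in> ?U" for x
    proof -
      obtain n where "x \<in> ba_generation_stage S n"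
        using x by blast
      then have "- x \<in> ba_generation_stage S (Suc n)"
        by (rule compl_in_ba_generation_stage_Suc)
      then show "- x \<in> ?U"
        by blast
    qed
  qed
  show "S \<subseteq> ?U"
    using ba_generation_stage.simps(1)[of S] by blast
qed

lemma card_of_binop_image_le_infinite:
  assumes "infinite S" "|T| \<le>o |S|"
  shows "|{f a b | a b. a \<in> T \<and> b \<in> T}| \<le>o |S|"
proof -
  have "{f a b | a b. a \<in> T \<and> b \<in> T} = case_prod f ` (T \<times> T)"
    by auto
  then have "|{f a b | a b. a \<in> T \<and> b \<in> T}| \<le>o |T \<times> T|"
    by (simp only: card_of_image)
  also have "|T \<times> T| \<le>o |S|"
    by (rule card_of_Times_le_infinite[OF assms(1,2,2)])
  finally show ?thesis .
qed

lemma card_of_ba_generation_stage: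
  assumes "infinite S"
  shows "|ba_generation_stage S n| \<le>o |S|"
proof (induction n)
  case 0
  have "|{bot, top} :: 'a set| \<le>o |S|"
    by (rule card_of_finite_le_infinite) (simp_all add: assms)
  then have "|S \<union> {bot, top}| \<le>o |S|"
    by (rule card_of_Un_le_infinite[OF assms ordLeq_refl[OF card_of_Card_order]])
  then show ?case
    by (simp only: ba_generation_stage.simps)
next
  case (Suc n)
  let ?T = "ba_generation_stage S n"
  have "|uminus ` ?T| \<le>o |S|"
    using ordLeq_transitive[OF card_of_image Suc.IH] .
  then have "|?T \<union> {sup a b | a b. a \<in> ?T \<and> b \<in> ?T} \<union> {inf a b | a b. a \<in> ?T \<and> b \<in> ?T}
      \<union> uminus ` ?T| \<le>o |S|"
    by (intro card_of_Un_le_infinite[OF assms] card_of_binop_image_le_infinite[OF assms] Suc.IH)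
  then show ?case
    by (simp only: ba_generation_stage.simps Let_def)
qed

lemma card_of_ba_generated:
  assumes "infinite S"
  shows "|ba_generated S| \<le>o |S|"
proof -
  have "|ba_generated S| \<le>o |\<Union>n. ba_generation_stage S n|"
    by (rule card_of_mono1[OF ba_generated_subset_stages])
  also have "|\<Union>n. ba_generation_stage S n| \<le>o |S|"
    using assms card_of_ba_generation_stage infinite_iff_card_of_nat
    by (intro card_of_UNION_ordLeq_infinite) auto
  finally show ?thesis .
qed

definition ba_dense :: "'a::boolean_algebra set \<Rightarrow> bool" where
  "ba_dense D \<longleftrightarrow> (\<forall>a. a \<noteq> bot \<longrightarrow> (\<exists>d\<in>D. d \<noteq> bot \<and> d \<le> a))"

lemma le_if_ba_dense_lower_set_subset:
  assumes "ba_dense D" and lower: "{d \<in> D. d \<le> x} \<subseteq> {d \<in> D. d \<le> y}"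
  shows "x \<le> y"
proof (rule ccontr)
  assume "\<not> x \<le> y"
  then have "inf x (- y) \<noteq> bot"
    by (simp add: inf_shunt)
  then obtain d where d: "d \<in> D" "d \<noteq> bot" "d \<le> inf x (- y)"
    using assms(1) unfolding ba_dense_def by blast
  then have "d \<le> y"
    using lower by auto
  moreover have "d \<le> - y"
    using d(3) by simp
  ultimately have "d \<le> inf y (- y)"
    by (rule le_infI)
  then show False
    using d(2) by (simp only: inf_compl_bot bot_unique)
qed

lemma inj_lower_set_if_ba_dense:
  assumes "ba_dense D"
  shows "inj (\<lambda>a. {d \<in> D. d \<le> a})"
  by (rule injI) (intro antisym le_if_ba_dense_lower_set_subset[OF assms]; simp)

lemma finite_UNIV_if_finite_ba_dense:
  fixes D :: "'a::boolean_algebra set"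
  assumes "finite D" "ba_dense D"
  shows "finite (UNIV :: 'a set)"
proof -
  have "range (\<lambda>a. {d \<in> D. d \<le> a}) \<subseteq> Pow D"
    by auto
  moreover have "finite (Pow D)"
    using assms(1) by simp
  ultimately show ?thesis
    by (rule inj_on_finite[OF inj_lower_set_if_ba_dense[OF assms(2)]])
qed

lemma ba_automorphismsD:
  assumes "f \<in> ba_automorphisms"
  shows "bij f" "f (sup x y) = sup (f x) (f y)" "f (inf x y) = inf (f x) (f y)"
    "f (- x) = - f x" "f bot = bot" "f top = top"
  using assms unfolding ba_automorphisms_def by auto

lemma ba_automorphism_le_iff:
  assumes "f \<in> ba_automorphisms"
  shows "f x \<le> f y \<longleftrightarrow> x \<le> y"
proof -
  have "f x \<le> f y \<longleftrightarrow> f (inf x y) = f x"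
    using ba_automorphismsD(3)[OF assms] by (simp add: inf.absorb_iff1)
  also have "\<dots> \<longleftrightarrow> inf x y = x"
    using ba_automorphismsD(1)[OF assms] by (simp add: bij_is_inj inj_eq)
  finally show ?thesis
    by (simp add: inf.absorb_iff1)
qed

lemma ba_dense_image_ba_automorphism:
  assumes "f \<in> ba_automorphisms" "ba_dense D"
  shows "ba_dense (f ` D)"
  unfolding ba_dense_def
proof (intro allI impI)
  fix a :: 'a
  assume "a \<noteq> bot"
  obtain b where b: "a = f b"
    using bij_is_surj[OF ba_automorphismsD(1)[OF assms(1)]] by (rule surjE)
  then have "b \<noteq> bot"
    using \<open>a \<noteq> bot\<close> ba_automorphismsD(5)[OF assms(1)] by auto
  then obtain d where "d \<in> D" "d \<noteq> bot" "d \<le> b"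
    using assms(2) unfolding ba_dense_def by blast
  moreover have "f d \<le> a" "f d \<noteq> bot"
    using b \<open>d \<le> b\<close> \<open>d \<noteq> bot\<close> ba_automorphism_le_iff[OF assms(1)]
      ba_automorphism_le_iff[OF assms(1), of d bot]
    by (simp_all add: ba_automorphismsD(5)[OF assms(1)] bot_unique)
  ultimately show "\<exists>e\<in>f ` D. e \<noteq> bot \<and> e \<le> a"
    by blast
qed

lemma ba_automorphisms_eq_on_ba_generated:
  assumes "f \<in> ba_automorphisms" "g \<in> ba_automorphisms" "\<forall>x\<in>X. f x = g x"
  shows "\<forall>x\<in>ba_generated X. f x = g x"
proof -
  have "ba_generated X \<subseteq> {x. f x = g x}"
    by (rule ba_generated_least, rule ba_subalgebrasI)
      (use assms in \<open>auto simp: ba_automorphismsD\<close>)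
  then show ?thesis
    by blast
qed

lemma ba_automorphisms_eqI_ba_dense:
  assumes f: "f \<in> ba_automorphisms" and g: "g \<in> ba_automorphisms"
    and "ba_dense D" and agree: "\<forall>x\<in>D. f x = g x"
  shows "f = g"
proof
  fix a
  have same_side: "f d \<le> f a \<longleftrightarrow> f d \<le> g a" if "d \<in> D" for d
  proof -
    have "f d \<le> f a \<longleftrightarrow> d \<le> a"
      by (rule ba_automorphism_le_iff[OF f])
    also have "\<dots> \<longleftrightarrow> g d \<le> g a"
      by (rule ba_automorphism_le_iff[OF g, symmetric])
    finally show ?thesis
      using agree that by simp
  qed
  have "{e \<in> f ` D. e \<le> f a} = {e \<in> f ` D. e \<le> g a}"
    by (auto simp: same_side)
  then show "f a = g a"
    by (rule injD[OF inj_lower_set_if_ba_dense[OF ba_dense_image_ba_automorphism[OF f \<open>ba_dense D\<close>]]])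
qed

lemma card_of_ba_automorphisms_le_Pow:
  fixes X :: "'a::boolean_algebra set"
  assumes "ba_dense (ba_generated X)"
  shows "|ba_automorphisms :: ('a \<Rightarrow> 'a) set| \<le>o |Pow (X \<times> ba_generated X)|"
proof (rule card_of_ordLeqI)
  let ?code = "\<lambda>f :: 'a \<Rightarrow> 'a. {(x, d) \<in> X \<times> ba_generated X. d \<le> f x}"
  show "inj_on ?code ba_automorphisms"
  proof (rule inj_onI)
    fix f g :: "'a \<Rightarrow> 'a"
    assume f: "f \<in> ba_automorphisms" and g: "g \<in> ba_automorphisms" and eq: "?code f = ?code g"
    have "{d \<in> ba_generated X. d \<le> f x} = {d \<in> ba_generated X. d \<le> g x}" if "x \<in> X" for x
      using eq that by auto
    then have "\<forall>x\<in>X. f x = g x"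
      using injD[OF inj_lower_set_if_ba_dense[OF assms]] by blast
    then have "\<forall>x\<in>ba_generated X. f x = g x"
      by (rule ba_automorphisms_eq_on_ba_generated[OF f g])
    then show "f = g"
      by (rule ba_automorphisms_eqI_ba_dense[OF f g assms])
  qed
  show "?code f \<in> Pow (X \<times> ba_generated X)" for f
    by auto
qed

definition ba_irredundant :: "'a::boolean_algebra set \<Rightarrow> bool" where
  "ba_irredundant X \<longleftrightarrow> (\<forall>x\<in>X. x \<notin> ba_generated (X - {x}))"

lemma inj_on_ba_generated_Pow:
  assumes "ba_irredundant X"
  shows "inj_on ba_generated (Pow X)"
proof -
  have "Y \<subseteq> Y'" if Y: "Y \<subseteq> X" and Y': "Y' \<subseteq> X" and eq: "ba_generated Y = ba_generated Y'"
    for Y Y'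
  proof
    fix y
    assume "y \<in> Y"
    show "y \<in> Y'"
    proof (rule ccontr)
      assume "y \<notin> Y'"
      then have "ba_generated Y' \<subseteq> ba_generated (X - {y})"
        using Y' by (intro ba_generated_mono) blast
      moreover have "y \<in> ba_generated Y"
        using \<open>y \<in> Y\<close> subset_ba_generated by blast
      ultimately have "y \<in> ba_generated (X - {y})"
        using eq by blast
      then show False
        using assms \<open>y \<in> Y\<close> Y unfolding ba_irredundant_def by blast
    qed
  qed
  then show ?thesis
    by (intro inj_onI subset_antisym) auto
qed

lemma ba_irredundant_Union_chain:
  assumes "C \<in> chains {X. ba_irredundant X}"
  shows "ba_irredundant (\<Union>C)"
  unfolding ba_irredundant_def
proof (intro ballI notI)
  fix x
  assume x: "x \<in> \<Union>C" and "x \<in> ba_generated (\<Union>C - {x})"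
  from this(2) obtain F where F: "finite F" "F \<subseteq> \<Union>C - {x}" "x \<in> ba_generated F"
    by (rule ba_generated_finitary)
  have "subset.chain {X. ba_irredundant X} C"
    using assms unfolding chains_def chain_subset_def subset.chain_def by auto
  moreover have "finite (insert x F)" "insert x F \<subseteq> \<Union>C" "C \<noteq> {}"
    using F x by auto
  ultimately obtain Y where Y: "Y \<in> C" "insert x F \<subseteq> Y"
    using finite_subset_Union_chain by metis
  have "ba_irredundant Y"
    using Y(1) assms unfolding chains_def by blast
  moreover have "x \<in> ba_generated (Y - {x})"
    using F Y(2) ba_generated_mono[of F "Y - {x}"] by blast
  ultimately show False
    using Y(2) unfolding ba_irredundant_def by blast
qed

lemma ex_maximal_ba_irredundant:
  "\<exists>X :: 'a::boolean_algebra set. ba_irredundant X \<and> (\<forall>Y. ba_irredundant Y \<longrightarrow> X \<subseteq> Y \<longrightarrow> Y = X)"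
proof -
  have "\<forall>C\<in>chains {X :: 'a set. ba_irredundant X}. \<Union>C \<in> {X. ba_irredundant X}"
    using ba_irredundant_Union_chain by blast
  then have "\<exists>X\<in>{X :: 'a set. ba_irredundant X}. \<forall>Y\<in>{X. ba_irredundant X}. X \<subseteq> Y \<longrightarrow> Y = X"
    by (rule Zorn_Lemma)
  then show ?thesis
    by blast
qed

lemma ba_irredundant_insert:
  assumes irredundant: "ba_irredundant X" and a_new: "a \<notin> ba_generated X"
    and none_below: "\<forall>d\<in>ba_generated X. d \<le> a \<longrightarrow> d = bot"
  shows "ba_irredundant (insert a X)"
  unfolding ba_irredundant_def
proof (intro ballI notI)
  fix x
  assume "x \<in> insert a X" and x_gen: "x \<in> ba_generated (insert a X - {x})"
  show False
  proof (cases "x = a")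
    case True
    then have "ba_generated (insert a X - {x}) \<subseteq> ba_generated X"
      by (intro ba_generated_mono) blast
    then show False
      using x_gen a_new True by blast
  next
    case False
    then have "x \<in> X" "x \<in> ba_generated (insert a (X - {x}))"
      using \<open>x \<in> insert a X\<close> x_gen by (auto simp: insert_Diff_if)
    then have "x \<in> {ba_cond a p q | p q. p \<in> ba_generated (X - {x}) \<and> q \<in> ba_generated (X - {x})}"
      using ba_generated_insert by blast
    then obtain p q where x_eq: "x = ba_cond a p q" and q: "q \<in> ba_generated (X - {x})"
      by blast
    txt \<open>x and q agree below - a, so their differences lie below a and therefore vanish.\<close>
    have "inf (- a) x = inf (- a) q"
      by (simp add: x_eq inf_ba_cond)
    then have "inf x (- q) \<le> a" "inf q (- x) \<le> a"
      using inf_compl_le_if_inf_compl_eq[of a x q] inf_compl_le_if_inf_compl_eq[of a q x] by simp_all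
    moreover have "x \<in> ba_generated X" "q \<in> ba_generated X"
      using \<open>x \<in> X\<close> q subset_ba_generated ba_generated_mono[of "X - {x}" X] by blast+
    then have "inf x (- q) \<in> ba_generated X" "inf q (- x) \<in> ba_generated X"
      by (simp_all add: ba_generated_closed)
    ultimately have "inf x (- q) = bot" "inf q (- x) = bot"
      using none_below by blast+
    then have "x = q"
      using neq_iff_inf_compl[of x q] by simp
    then show False
      using irredundant \<open>x \<in> X\<close> q unfolding ba_irredundant_def by blast
  qed
qed

lemma ba_dense_ba_generated_if_maximal_irredundant:
  assumes irredundant: "ba_irredundant X"
    and maximal: "\<forall>Y. ba_irredundant Y \<longrightarrow> X \<subseteq> Y \<longrightarrow> Y = X"
  shows "ba_dense (ba_generated X)"
  unfolding ba_dense_def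
proof (intro allI impI, rule ccontr)
  fix a
  assume "a \<noteq> bot" and "\<not> (\<exists>d\<in>ba_generated X. d \<noteq> bot \<and> d \<le> a)"
  then have a_new: "a \<notin> ba_generated X" and "\<forall>d\<in>ba_generated X. d \<le> a \<longrightarrow> d = bot"
    by auto
  then have "ba_irredundant (insert a X)"
    by (rule ba_irredundant_insert[OF irredundant])
  then have "insert a X = X"
    using maximal by blast
  then show False
    using a_new subset_ba_generated by blast
qed

theorem mainTheorem5:
  assumes "infinite (UNIV :: 'a::boolean_algebra set)"
  shows "|ba_automorphisms :: ('a \<Rightarrow> 'a) set| \<le>o |ba_subalgebras :: 'a set set|"
proof -
  obtain X :: "'a set" where irredundant: "ba_irredundant X"
    and maximal: "\<forall>Y. ba_irredundant Y \<longrightarrow> X \<subseteq> Y \<longrightarrow> Y = X"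
    using ex_maximal_ba_irredundant by blast
  have dense: "ba_dense (ba_generated X)"
    by (rule ba_dense_ba_generated_if_maximal_irredundant[OF irredundant maximal])
  have "infinite X"
    using assms finite_UNIV_if_finite_ba_dense[OF finite_ba_generated dense] by blast
  have "|ba_automorphisms :: ('a \<Rightarrow> 'a) set| \<le>o |Pow (X \<times> ba_generated X)|"
    by (rule card_of_ba_automorphisms_le_Pow[OF dense])
  also have "|Pow (X \<times> ba_generated X)| \<le>o |Pow X|"
    by (intro card_of_Pow_mono card_of_Times_le_infinite[OF \<open>infinite X\<close>]
        card_of_ba_generated[OF \<open>infinite X\<close>] ordLeq_refl card_of_Card_order)
  also have "|Pow X| \<le>o |ba_subalgebras :: 'a set set|"
    using inj_on_ba_generated_Pow[OF irredundant] ba_generated_in_subalgebras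
    by (rule card_of_ordLeqI)
  finally show ?thesis .
qed

end
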